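(* Let $R$ be a pre-Schreier domain and let $a_1,\dots,a_n\in\operatorname{Sqf} R$ be such that $a_i$ and $a_j$ are relatively prime for all $i\neq j$. Then $a_1a_2\cdots a_n\in\operatorname{Sqf} R$.
   Context: A domain is a commutative ring with identity without zero divisors. A domain $R$ is pre-Schreier if every non-zero $a\in R$ is primal: whenever $a\mid bc$ with $b,c\in R$, there exist $a_1,a_2\in R$ with $a=a_1a_2$, $a_1\mid b$ and $a_2\mid c$. Elements $a,b$ are relatively prime if they have no common non-invertible divisor. $R^{\ast}$ denotes the set of invertible elements of $R$. An element $a\in R$ is square-free if it cannot be written as $a=b^2c$ with $b\in R\setminus R^{\ast}$ and $c\in R$; $\operatorname{Sqf} R$ denotes the set of square-free elements of $R$. *)

theory Defs
  imports "HOL-Computational_Algebra.Squarefree"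
begin

definition primal :: "'a::idom \<Rightarrow> bool" where
  "primal a \<longleftrightarrow> (\<forall>b c. a dvd b * c \<longrightarrow>
     (\<exists>a1 a2. a = a1 * a2 \<and> a1 dvd b \<and> a2 dvd c))"

definition pre_Schreier :: "'a::idom itself \<Rightarrow> bool" where
  "pre_Schreier _ \<longleftrightarrow> (\<forall>a::'a. a \<noteq> 0 \<longrightarrow> primal a)"

definition rel_prime :: "'a::idom \<Rightarrow> 'a \<Rightarrow> bool" where
  "rel_prime a b \<longleftrightarrow> (\<forall>d. d dvd a \<longrightarrow> d dvd b \<longrightarrow> d dvd 1)"

end

theory Submission
  imports Defs
begin

text \<open>
  In a pre-Schreier domain a nonzero element relatively prime to \<open>b\<close> can be cancelled
  against \<open>b\<close> in a divisibility \<open>d dvd a * b\<close>, and relative primality to a nonzero \<open>b\<close>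
  is preserved under products.  If now \<open>x\<^sup>2 dvd a * b\<close> with \<open>a, b\<close> square-free and relatively
  prime, split \<open>x = x\<^sub>1 * x\<^sub>2\<close> with \<open>x\<^sub>1 dvd a\<close> and \<open>x\<^sub>2 dvd b\<close> by primality of \<open>x\<close>; then \<open>x\<^sub>1\<^sup>2\<close> is
  relatively prime to \<open>b\<close>, so \<open>x\<^sub>1\<^sup>2 dvd a\<close> and \<open>x\<^sub>1\<close> is a unit, and likewise \<open>x\<^sub>2\<close>.
\<close>

(* The library's squarefree_1 needs algebraic_semidom, which idom does not provide. *)
lemma squarefree_one: "squarefree (1 :: 'a::comm_monoid_mult)"
  by (rule squarefreeI) (metis dvd_mult_left power2_eq_square)

lemma pre_Schreier_primal:
  fixes a :: "'a::idom"
  assumes "pre_Schreier TYPE('a)" and "a \<noteq> 0"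
  shows "primal a"
  using assms unfolding pre_Schreier_def by blast

lemma rel_prime_commute: "rel_prime a b \<longleftrightarrow> rel_prime b a"
  unfolding rel_prime_def by blast

lemma rel_prime_divisor_left: "rel_prime a b \<Longrightarrow> x dvd a \<Longrightarrow> rel_prime x b"
  unfolding rel_prime_def using dvd_trans by blast

lemma primal_rel_prime_dvd_mult_cancel:
  assumes "primal d" and "rel_prime d b" and "d dvd a * b"
  shows "d dvd a"
proof -
  obtain d1 d2 where d: "d = d1 * d2" "d1 dvd a" "d2 dvd b"
    using assms(1,3) unfolding primal_def by blast
  have "d2 dvd 1"
    using assms(2) d(1,3) unfolding rel_prime_def by simp
  then obtain k where "1 = d2 * k"
    by (elim dvdE)
  then have "d1 = d * k"
    using d(1) by (metis mult.assoc mult_1_right)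
  then have "d dvd d1"
    by simp
  then show ?thesis
    using d(2) by (rule dvd_trans)
qed

lemma rel_prime_mult_left:
  fixes x :: "'a::idom"
  assumes "pre_Schreier TYPE('a)" and "b \<noteq> 0" and "rel_prime x b" and "rel_prime y b"
  shows "rel_prime (x * y) b"
  unfolding rel_prime_def
proof (intro allI impI)
  fix e
  assume e: "e dvd x * y" "e dvd b"
  have "primal e"
    using e(2) assms(1,2) by (auto intro: pre_Schreier_primal)
  then obtain e1 e2 where e12: "e = e1 * e2" "e1 dvd x" "e2 dvd y"
    using e(1) unfolding primal_def by blast
  have "e1 dvd b" "e2 dvd b"
    using e(2) e12(1) by (auto intro: dvd_mult_left dvd_mult_right)
  then have "e1 dvd 1" "e2 dvd 1"
    using assms(3,4) e12 unfolding rel_prime_def by blast+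
  then show "e dvd 1"
    using e12(1) mult_dvd_mono[of e1 1 e2 1] by simp
qed

lemma rel_prime_prod_left:
  fixes f :: "'b \<Rightarrow> 'a::idom"
  assumes "pre_Schreier TYPE('a)" and "b \<noteq> 0"
    and "\<And>i. i \<in> A \<Longrightarrow> rel_prime (f i) b"
  shows "rel_prime (prod f A) b"
  using assms(3)
proof (induction A rule: infinite_finite_induct)
  case (insert i A)
  then show ?case
    by (simp add: rel_prime_mult_left[OF assms(1,2)])
qed (simp_all add: rel_prime_def)

lemma squarefree_mult_rel_prime:
  fixes a :: "'a::idom"
  assumes ps: "pre_Schreier TYPE('a)"
    and sa: "squarefree a" and sb: "squarefree b" and ab: "rel_prime a b"
  shows "squarefree (a * b)"
proof (rule squarefreeI)
  have unit_factor: "y dvd 1"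
    if c: "squarefree c" and "d \<noteq> 0" "rel_prime c d" "y dvd c" "y\<^sup>2 dvd c * d"
    for y c d :: 'a
  proof -
    have "rel_prime y d"
      using that(3,4) by (rule rel_prime_divisor_left)
    then have rel: "rel_prime (y\<^sup>2) d"
      using rel_prime_mult_left[OF ps that(2)] by (simp add: power2_eq_square)
    have "y \<noteq> 0"
      using c that(4) by (metis dvd_0_left not_squarefree_0)
    then have "primal (y\<^sup>2)"
      by (simp add: pre_Schreier_primal[OF ps])
    then have "y\<^sup>2 dvd c"
      using rel that(5) by (rule primal_rel_prime_dvd_mult_cancel)
    then show ?thesis
      by (rule squarefreeD[OF c])
  qed
  fix x
  assume x: "x\<^sup>2 dvd a * b"
  have a0: "a \<noteq> 0" and b0: "b \<noteq> 0"
    using sa sb by auto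
  then have "a * b \<noteq> 0"
    by simp
  then have "x \<noteq> 0"
    using x by (metis dvd_0_left zero_power2)
  moreover have "x dvd a * b"
    using x by (metis dvd_mult_left power2_eq_square)
  ultimately obtain x1 x2 where x12: "x = x1 * x2" "x1 dvd a" "x2 dvd b"
    using pre_Schreier_primal[OF ps] unfolding primal_def by blast
  have "x\<^sup>2 = x1\<^sup>2 * x2\<^sup>2"
    using x12(1) by (simp add: power_mult_distrib)
  then have "x1\<^sup>2 dvd a * b" "x2\<^sup>2 dvd b * a"
    using x by (metis dvd_mult_left dvd_mult_right mult.commute)+
  then have "x1 dvd 1" "x2 dvd 1"
    using unit_factor[OF sa b0 ab x12(2)] unit_factor[OF sb a0 _ x12(3)] ab
    by (simp_all add: rel_prime_commute)
  then show "x dvd 1"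
    using x12(1) mult_dvd_mono[of x1 1 x2 1] by simp
qed

lemma squarefree_prod_rel_prime:
  fixes f :: "'b \<Rightarrow> 'a::idom"
  assumes ps: "pre_Schreier TYPE('a)"
    and "\<And>i j. i \<in> A \<Longrightarrow> j \<in> A \<Longrightarrow> i \<noteq> j \<Longrightarrow> rel_prime (f i) (f j)"
    and "\<And>i. i \<in> A \<Longrightarrow> squarefree (f i)"
  shows "squarefree (prod f A)"
  using assms(2,3)
proof (induction A rule: infinite_finite_induct)
  case (insert i A)
  have "f i \<noteq> 0"
    using insert.prems(2)[of i] by auto
  then have "rel_prime (prod f A) (f i)"
    using insert by (intro rel_prime_prod_left[OF ps]) auto
  then have "squarefree (prod f A * f i)"
    using insert by (intro squarefree_mult_rel_prime[OF ps]) auto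
  then show ?case
    using insert.hyps by (simp add: mult.commute)
qed (simp_all add: squarefree_one)

theorem lemma2:
  fixes a :: "nat \<Rightarrow> 'a::idom" and n :: nat
  assumes "pre_Schreier TYPE('a)"
    and "\<forall>i\<in>{1..n}. squarefree (a i)"
    and "\<forall>i\<in>{1..n}. \<forall>j\<in>{1..n}. i \<noteq> j \<longrightarrow> rel_prime (a i) (a j)"
  shows "squarefree (\<Prod>i=1..n. a i)"
  using assms by (intro squarefree_prod_rel_prime) auto

end
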